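(* For every integer $q>2$, $\mathrm{Inn}(Q_2(T_{2,q}\cup A))\cong D_{2q/\gcd(2,q)}$ and $\mathrm{Trans}(Q_2(T_{2,q}\cup A))\cong D_q$.
   Context: A quandle is a set $Q$ with binary operations $\rhd$, $\rhd^{-1}$ satisfying $x\rhd x=x$, $(x\rhd y)\rhd^{-1}y=x=(x\rhd^{-1}y)\rhd y$, and $(x\rhd y)\rhd z=(x\rhd z)\rhd(y\rhd z)$; write $x^y=x\rhd y$. For $x\in Q$ the point symmetry $S_x:Q\to Q$ is $S_x(y)=y\rhd x$. $\mathrm{Inn}(Q)$ is the subgroup of the automorphism group generated by all $S_x$, and $\mathrm{Trans}(Q)$ is the subgroup generated by all products $S_xS_y^{-1}$. A quandle is involutory if $(x^y)^y=x$ for all $x,y$. The fundamental quandle of a link is presented from a diagram by one generator per arc and a relation $x_i=x_k^{x_j}$ at each crossing (over-arc $x_j$); the involutory quandle $Q_2(L)$ is its quotient by the relations $x^{yy}=x$ for all pairs of generators, and it is independent of orientation. $T_{2,q}$ is the $(2,q)$ torus link (two strands with $q$ right-handed half twists) lying on an unknotted torus $F\subset S^3$; $T_{2,q}\cup A$ is obtained by adjoining an axis $A$, the core of the solid torus bounded by $F$ around which $T_{2,q}$ winds twice, so that $A$ has linking number $2$ with $T_{2,q}$. $D_m$ denotes the dihedral group of order $2m$. *)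

theory Defs
  imports "HOL-Algebra.Algebra"
begin

text \<open>Terms in the quandle signature: generators, the operation x \<rhd> y (Rt x y)
  and its inverse x \<rhd>^-1 y (RtInv x y).\<close>

datatype 'g qterm = Gen 'g | Rt "'g qterm" "'g qterm" | RtInv "'g qterm" "'g qterm"

fun qgens :: "'g qterm \<Rightarrow> 'g set" where
  "qgens (Gen g) = {g}"
| "qgens (Rt x y) = qgens x \<union> qgens y"
| "qgens (RtInv x y) = qgens x \<union> qgens y"

definition qterms :: "'g set \<Rightarrow> 'g qterm set" where
  "qterms G = {t. qgens t \<subseteq> G}"

inductive qcong :: "'g set \<Rightarrow> ('g qterm \<times> 'g qterm) set \<Rightarrow> 'g qterm \<Rightarrow> 'g qterm \<Rightarrow> bool"
  for G R where
  refl: "t \<in> qterms G \<Longrightarrow> qcong G R t t"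
| sym: "qcong G R s t \<Longrightarrow> qcong G R t s"
| trans: "qcong G R s t \<Longrightarrow> qcong G R t u \<Longrightarrow> qcong G R s u"
| rel: "(s, t) \<in> R \<Longrightarrow> s \<in> qterms G \<Longrightarrow> t \<in> qterms G \<Longrightarrow> qcong G R s t"
| idem: "x \<in> qterms G \<Longrightarrow> qcong G R (Rt x x) x"
| inv1: "x \<in> qterms G \<Longrightarrow> y \<in> qterms G \<Longrightarrow> qcong G R (RtInv (Rt x y) y) x"
| inv2: "x \<in> qterms G \<Longrightarrow> y \<in> qterms G \<Longrightarrow> qcong G R (Rt (RtInv x y) y) x"
| dist: "x \<in> qterms G \<Longrightarrow> y \<in> qterms G \<Longrightarrow> z \<in> qterms G \<Longrightarrow>
          qcong G R (Rt (Rt x y) z) (Rt (Rt x z) (Rt y z))"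
| cong_Rt: "qcong G R x x' \<Longrightarrow> qcong G R y y' \<Longrightarrow> qcong G R (Rt x y) (Rt x' y')"
| cong_RtInv: "qcong G R x x' \<Longrightarrow> qcong G R y y' \<Longrightarrow> qcong G R (RtInv x y) (RtInv x' y')"

definition qclass :: "'g set \<Rightarrow> ('g qterm \<times> 'g qterm) set \<Rightarrow> 'g qterm \<Rightarrow> 'g qterm set" where
  "qclass G R t = {s. qcong G R t s}"

definition pres_carrier :: "'g set \<Rightarrow> ('g qterm \<times> 'g qterm) set \<Rightarrow> 'g qterm set set" where
  "pres_carrier G R = qclass G R ` qterms G"

definition pres_op :: "'g set \<Rightarrow> ('g qterm \<times> 'g qterm) set \<Rightarrow> 'g qterm set \<Rightarrow> 'g qterm set \<Rightarrow> 'g qterm set" where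
  "pres_op G R U V = qclass G R (Rt (SOME s. s \<in> U) (SOME t. t \<in> V))"

definition invol_rels :: "'g set \<Rightarrow> ('g qterm \<times> 'g qterm) set" where
  "invol_rels G = {(Rt (Rt (Gen x) (Gen y)) (Gen y), Gen x) | x y. x \<in> G \<and> y \<in> G}"

definition point_sym :: "'a set \<Rightarrow> ('a \<Rightarrow> 'a \<Rightarrow> 'a) \<Rightarrow> 'a \<Rightarrow> ('a \<Rightarrow> 'a)" where
  "point_sym Q op x = (\<lambda>y\<in>Q. op y x)"

definition Inn_group :: "'a set \<Rightarrow> ('a \<Rightarrow> 'a \<Rightarrow> 'a) \<Rightarrow> ('a \<Rightarrow> 'a) monoid" where
  "Inn_group Q op = (BijGroup Q)\<lparr>carrier := generate (BijGroup Q) (point_sym Q op ` Q)\<rparr>"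

definition Trans_group :: "'a set \<Rightarrow> ('a \<Rightarrow> 'a \<Rightarrow> 'a) \<Rightarrow> ('a \<Rightarrow> 'a) monoid" where
  "Trans_group Q op = (BijGroup Q)\<lparr>carrier := generate (BijGroup Q)
     {point_sym Q op x \<otimes>\<^bsub>BijGroup Q\<^esub> inv\<^bsub>BijGroup Q\<^esub> (point_sym Q op y) | x y. x \<in> Q \<and> y \<in> Q}\<rparr>"

section \<open>Dihedral group D_m of order 2m: (a,s) stands for r^a f^s\<close>

definition dihedral_group :: "nat \<Rightarrow> (int \<times> bool) monoid" where
  "dihedral_group m = \<lparr>carrier = {0..<int m} \<times> UNIV,
     monoid.mult = (\<lambda>(a, s) (b, t). ((if s then a - b else a + b) mod int m, s \<noteq> t)),
     monoid.one = (0, False)\<rparr>"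

text \<open>Diagram: closed 2-braid sigma_1^q with the braid axis A drawn as a belt around the
  two strands (upper edge of the belt under both strands, lower edge over both).
  Arcs of T: a_0, ..., a_{q+1}; arcs of A: c_0, c_1.\<close>

datatype arc = ArcT nat | ArcA nat

definition TA_gens :: "nat \<Rightarrow> arc set" where
  "TA_gens q = {ArcT k | k. k \<le> q + 1} \<union> {ArcA 0, ArcA 1}"

definition TA_rels :: "nat \<Rightarrow> (arc qterm \<times> arc qterm) set" where
  "TA_rels q =
     {(Gen (ArcT (k + 1)), Rt (Gen (ArcT (k - 1))) (Gen (ArcT k))) | k. 1 \<le> k \<and> k \<le> q}
   \<union> {(Gen (ArcA 1), Rt (Gen (ArcA 0)) (Gen (ArcT (q + 1)))),
      (Gen (ArcA 0), Rt (Gen (ArcA 1)) (Gen (ArcT q))),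
      (Gen (ArcT 1), Rt (Gen (ArcT (q + 1))) (Gen (ArcA 0))),
      (Gen (ArcT 0), Rt (Gen (ArcT q)) (Gen (ArcA 0)))}"

definition Q2_TA_carrier :: "nat \<Rightarrow> arc qterm set set" where
  "Q2_TA_carrier q = pres_carrier (TA_gens q) (TA_rels q \<union> invol_rels (TA_gens q))"

definition Q2_TA_op :: "nat \<Rightarrow> arc qterm set \<Rightarrow> arc qterm set \<Rightarrow> arc qterm set" where
  "Q2_TA_op q = pres_op (TA_gens q) (TA_rels q \<union> invol_rels (TA_gens q))"

end

theory Submission
  imports Defs
begin

(* The involutory quandle Q_2(T_{2,q} \<union> A) has 2q + 2 elements. The arcs of T_{2,q} give the
   dihedral quandle of order 2q, with k \<rhd> j = 2j - k (mod 2q); the axis gives two more elements,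
   which every element of the T-part swaps and each of which acts on the T-part as the half turn
   k \<mapsto> k + q. That this model is the quandle presented by the diagram follows from evaluating
   terms in it (soundness) and from rewriting every term, using the relations and involutivity,
   into one of 2q + 2 normal forms (completeness).
   Hence all point symmetries are dihedral maps x \<mapsto> a \<plusminus> x of Z/2q (acting compatibly on the
   axis). The reflections x \<mapsto> 2j - x and the half turn generate all of D_{2q} when q is odd,
   and otherwise the subgroup of maps x \<mapsto> a + x, x \<mapsto> a - x with a \<equiv> sq (mod 2), s = 0, 1 the
   orientation, which is a copy of D_q; the transvections generate this subgroup for every q. *)

section \<open>A model of the quandle\<close>

datatype model_elt = TE int | AE bool

definition model_carrier :: "nat \<Rightarrow> model_elt set" where
  "model_carrier q = TE ` {0..<2 * int q} \<union> range AE"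

lemma model_carrier_TE [simp]: "TE j \<in> model_carrier q \<longleftrightarrow> 0 \<le> j \<and> j < 2 * int q"
  by (auto simp: model_carrier_def)

lemma model_carrier_AE [simp]: "AE b \<in> model_carrier q"
  by (simp add: model_carrier_def)

lemma model_carrier_cases:
  assumes "u \<in> model_carrier q"
  obtains i where "u = TE i" "0 \<le> i" "i < 2 * int q" | b where "u = AE b"
  using assms by (auto simp: model_carrier_def)

text \<open>A pair (a, s) stands for the map x \<mapsto> a + x (s = False) or x \<mapsto> a - x (s = True) of Z/2q,
  which swaps the two axis elements iff s; this is the encoding of dihedral_group, but unreduced.\<close>

definition dih_act :: "nat \<Rightarrow> int \<times> bool \<Rightarrow> model_elt \<Rightarrow> model_elt" where
  "dih_act q d x = (case x of
      TE j \<Rightarrow> TE ((if snd d then fst d - j else fst d + j) mod (2 * int q))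
    | AE b \<Rightarrow> AE (b \<noteq> snd d))"

definition dih_mul :: "int \<times> bool \<Rightarrow> int \<times> bool \<Rightarrow> int \<times> bool" where
  "dih_mul d1 d2 = (if snd d1 then fst d1 - fst d2 else fst d1 + fst d2, snd d1 \<noteq> snd d2)"

definition dih_inv :: "int \<times> bool \<Rightarrow> int \<times> bool" where
  "dih_inv d = (if snd d then fst d else - fst d, snd d)"

definition sym_of :: "nat \<Rightarrow> model_elt \<Rightarrow> int \<times> bool" where
  "sym_of q y = (case y of TE k \<Rightarrow> (2 * k, True) | AE b \<Rightarrow> (int q, False))"

definition model_op :: "nat \<Rightarrow> model_elt \<Rightarrow> model_elt \<Rightarrow> model_elt" where
  "model_op q x y = dih_act q (sym_of q y) x"

lemma dih_act_mul: "dih_act q (dih_mul d1 d2) x = dih_act q d1 (dih_act q d2 x)"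
  by (cases x; cases d1; cases d2) (auto simp: dih_act_def dih_mul_def mod_simps algebra_simps)

lemma dih_act_cong:
  assumes "fst d mod (2 * int q) = fst d' mod (2 * int q)" and "snd d = snd d'"
  shows "dih_act q d = dih_act q d'"
proof
  fix x show "dih_act q d x = dih_act q d' x"
    using assms by (cases x; cases d; cases d')
      (auto simp: dih_act_def mod_simps, metis mod_diff_left_eq, metis mod_add_left_eq)
qed

lemma dih_act_one: "x \<in> model_carrier q \<Longrightarrow> dih_act q (0, False) x = x"
  by (auto simp: model_carrier_def dih_act_def)

lemma dih_act_closed: "q > 0 \<Longrightarrow> dih_act q d x \<in> model_carrier q"
  by (cases x) (auto simp: model_carrier_def dih_act_def)

lemma dih_act_mul_inv: "dih_act q (dih_mul d (dih_inv d)) = dih_act q (0, False)"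
  by (rule dih_act_cong) (auto simp: dih_mul_def dih_inv_def)

lemma dih_act_inv_mul: "dih_act q (dih_mul (dih_inv d) d) = dih_act q (0, False)"
  by (rule dih_act_cong) (auto simp: dih_mul_def dih_inv_def)

lemma dih_act_sym_of_sq: "dih_act q (dih_mul (sym_of q y) (sym_of q y)) = dih_act q (0, False)"
  by (rule dih_act_cong) (auto simp: dih_mul_def sym_of_def split: model_elt.splits)

lemma dih_act_sym_of_conj:
  "dih_act q (dih_mul (sym_of q (dih_act q h y)) h) = dih_act q (dih_mul h (sym_of q y))"
proof (rule dih_act_cong)
  obtain a s where h: "h = (a, s)" by (cases h)
  show "fst (dih_mul (sym_of q (dih_act q h y)) h) mod (2 * int q) = fst (dih_mul h (sym_of q y)) mod (2 * int q)"
  proof (cases y)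
    case (TE k)
    have "(2 * ((a + (if s then - k else k)) mod (2 * int q)) - a) mod (2 * int q)
        = (2 * (a + (if s then - k else k)) - a) mod (2 * int q)"
      by (metis mod_diff_left_eq mod_mult_right_eq)
    then show ?thesis using TE h by (auto simp: dih_mul_def sym_of_def dih_act_def algebra_simps)
  next
    case (AE b)
    have "(a - int q) mod (2 * int q) = (a + int q) mod (2 * int q)"
      by (simp add: mod_eq_dvd_iff)
    then show ?thesis using AE h by (auto simp: dih_mul_def sym_of_def dih_act_def algebra_simps)
  qed
  show "snd (dih_mul (sym_of q (dih_act q h y)) h) = snd (dih_mul h (sym_of q y))"
    by (cases y) (auto simp: dih_mul_def sym_of_def dih_act_def)
qed

lemma model_op_closed: "q > 0 \<Longrightarrow> model_op q x y \<in> model_carrier q"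
  by (simp add: model_op_def dih_act_closed)

lemma model_op_idem: "x \<in> model_carrier q \<Longrightarrow> model_op q x x = x"
  by (auto simp: model_carrier_def model_op_def dih_act_def sym_of_def)

lemma model_op_invol: "x \<in> model_carrier q \<Longrightarrow> model_op q (model_op q x y) y = x"
  by (simp add: model_op_def dih_act_mul[symmetric] dih_act_sym_of_sq dih_act_one)

lemma model_op_dist: "model_op q (model_op q x y) z = model_op q (model_op q x z) (model_op q y z)"
  by (simp add: model_op_def dih_act_mul[symmetric] dih_act_sym_of_conj)

lemma model_op_conj:
  assumes "u \<in> model_carrier q"
  shows "model_op q (model_op q (model_op q u e2) e1) e2 = model_op q u (model_op q e1 e2)"
proof -
  have "model_op q u (model_op q e1 e2) = model_op q (model_op q (model_op q u e2) e2) (model_op q e1 e2)"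
    using model_op_invol[OF assms] by simp
  also have "\<dots> = model_op q (model_op q (model_op q u e2) e1) e2"
    by (rule model_op_dist[symmetric])
  finally show ?thesis by simp
qed

section \<open>Inner and transvection groups of copies of the model\<close>

lemma dihedral_group_carrier [simp]: "carrier (dihedral_group m) = {0..<int m} \<times> UNIV"
  by (simp add: dihedral_group_def)

lemma dihedral_group_mult [simp]:
  "(a, s) \<otimes>\<^bsub>dihedral_group m\<^esub> (b, t) = ((if s then a - b else a + b) mod int m, s \<noteq> t)"
  by (simp add: dihedral_group_def)

lemma dihedral_group_one [simp]: "\<one>\<^bsub>dihedral_group m\<^esub> = (0, False)"
  by (simp add: dihedral_group_def)

lemma group_dihedral_group:
  assumes "m > 0"
  shows "group (dihedral_group m)"
proof (rule groupI)
  fix x y z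
  assume "x \<in> carrier (dihedral_group m)" "y \<in> carrier (dihedral_group m)" "z \<in> carrier (dihedral_group m)"
  then show "x \<otimes>\<^bsub>dihedral_group m\<^esub> y \<otimes>\<^bsub>dihedral_group m\<^esub> z = x \<otimes>\<^bsub>dihedral_group m\<^esub> (y \<otimes>\<^bsub>dihedral_group m\<^esub> z)"
    by (cases x; cases y; cases z) (auto simp: mod_simps algebra_simps)
next
  fix x assume "x \<in> carrier (dihedral_group m)"
  then obtain a s where x: "x = (a, s)" by (cases x)
  have "(if s then a else - a mod int m, s) \<in> carrier (dihedral_group m)"
    using assms x \<open>x \<in> carrier (dihedral_group m)\<close> by auto
  moreover have "(if s then a else - a mod int m, s) \<otimes>\<^bsub>dihedral_group m\<^esub> x = \<one>\<^bsub>dihedral_group m\<^esub>"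
    using x by (auto simp: mod_simps)
  ultimately show "\<exists>y\<in>carrier (dihedral_group m). y \<otimes>\<^bsub>dihedral_group m\<^esub> x = \<one>\<^bsub>dihedral_group m\<^esub>" ..
qed (use assms in auto)

text \<open>The image of D_q under half_dih_emb, an index-two subgroup of D_{2q}.\<close>

definition half_dih :: "nat \<Rightarrow> (int \<times> bool) set" where
  "half_dih q = {d. even (fst d - (if snd d then int q else 0))}"

definition half_dih_emb :: "nat \<Rightarrow> int \<times> bool \<Rightarrow> int \<times> bool" where
  "half_dih_emb q d = (2 * fst d + (if snd d then int q else 0), snd d)"

lemma double_mod_add: "(2 * (w mod n) + z) mod (2 * n) = (2 * w + z) mod (2 * (n :: int))"
  by (metis mod_add_left_eq mod_mult_mult1)

locale model_copy =
  fixes q :: nat and Q :: "'a set" and op :: "'a \<Rightarrow> 'a \<Rightarrow> 'a"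
    and e :: "'a \<Rightarrow> model_elt" and c :: "model_elt \<Rightarrow> 'a"
  assumes q_pos: "q > 0"
    and e_in: "\<And>U. U \<in> Q \<Longrightarrow> e U \<in> model_carrier q"
    and c_in: "\<And>m. m \<in> model_carrier q \<Longrightarrow> c m \<in> Q"
    and c_e: "\<And>U. U \<in> Q \<Longrightarrow> c (e U) = U"
    and e_c: "\<And>m. m \<in> model_carrier q \<Longrightarrow> e (c m) = m"
    and op_eq: "\<And>U V. U \<in> Q \<Longrightarrow> V \<in> Q \<Longrightarrow> op U V = c (model_op q (e U) (e V))"
begin

definition dperm :: "int \<times> bool \<Rightarrow> 'a \<Rightarrow> 'a" where
  "dperm d = (\<lambda>U\<in>Q. c (dih_act q d (e U)))"

lemma dperm_mul_apply: "U \<in> Q \<Longrightarrow> dperm d1 (dperm d2 U) = dperm (dih_mul d1 d2) U"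
  by (simp add: dperm_def c_in dih_act_closed q_pos e_c dih_act_mul)

lemma dperm_one_apply: "U \<in> Q \<Longrightarrow> dperm (0, False) U = U"
  by (simp add: dperm_def dih_act_one e_in c_e)

lemma dperm_cong:
  "fst d mod (2 * int q) = fst d' mod (2 * int q) \<Longrightarrow> snd d = snd d' \<Longrightarrow> dperm d = dperm d'"
  unfolding dperm_def using dih_act_cong[of d q d'] by simp

lemma dperm_Bij: "dperm d \<in> Bij Q"
proof -
  have inv: "dperm (dih_mul (dih_inv d) d) = dperm (0, False)" "dperm (dih_mul d (dih_inv d)) = dperm (0, False)"
    by (simp_all add: dperm_def dih_act_inv_mul dih_act_mul_inv)
  have "bij_betw (dperm d) Q Q"
  proof (rule bij_betwI[where g = "dperm (dih_inv d)"])
    show "dperm d \<in> Q \<rightarrow> Q" "dperm (dih_inv d) \<in> Q \<rightarrow> Q"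
      by (auto simp: dperm_def intro!: c_in dih_act_closed q_pos)
    show "dperm (dih_inv d) (dperm d U) = U" "dperm d (dperm (dih_inv d) U) = U" if "U \<in> Q" for U
      using that by (simp_all add: dperm_mul_apply inv dperm_one_apply)
  qed
  then show ?thesis by (simp add: Bij_def dperm_def)
qed

lemma dperm_mult: "dperm d1 \<otimes>\<^bsub>BijGroup Q\<^esub> dperm d2 = dperm (dih_mul d1 d2)"
  using dperm_Bij[of d1] dperm_Bij[of d2]
  by (auto simp: BijGroup_def compose_def dperm_mul_apply intro!: ext) (simp add: dperm_def)

lemma dperm_one: "dperm (0, False) = \<one>\<^bsub>BijGroup Q\<^esub>"
  by (auto simp: BijGroup_def dperm_one_apply intro!: ext) (simp add: dperm_def)

lemma dperm_inv: "inv\<^bsub>BijGroup Q\<^esub> (dperm d) = dperm (dih_inv d)"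
proof (rule group.inv_equality[OF group_BijGroup])
  show "dperm (dih_inv d) \<otimes>\<^bsub>BijGroup Q\<^esub> dperm d = \<one>\<^bsub>BijGroup Q\<^esub>"
    by (simp add: dperm_mult dperm_one[symmetric]) (simp add: dperm_def dih_act_inv_mul)
qed (simp_all add: BijGroup_def dperm_Bij)

lemma dperm_inj:
  assumes "dperm d1 = dperm d2"
  shows "fst d1 mod (2 * int q) = fst d2 mod (2 * int q) \<and> snd d1 = snd d2"
proof -
  have "dih_act q d1 m = dih_act q d2 m" if m: "m \<in> model_carrier q" for m
  proof -
    have "c (dih_act q d1 m) = c (dih_act q d2 m)"
      using arg_cong[OF assms, of "\<lambda>f. f (c m)"] c_in[OF m] by (simp add: dperm_def e_c m)
    then show ?thesis by (metis e_c dih_act_closed q_pos)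
  qed
  from this[of "TE 0"] this[of "AE False"] show ?thesis
    using q_pos by (simp add: model_carrier_def dih_act_def split: if_splits)
qed

lemma point_sym_eq: "U \<in> Q \<Longrightarrow> point_sym Q op U = dperm (sym_of q (e U))"
  by (auto simp: point_sym_def dperm_def op_eq model_op_def intro!: ext)

lemma point_sym_c_TE: "point_sym Q op (c (TE (k mod (2 * int q)))) = dperm (2 * k, True)"
proof -
  have m: "TE (k mod (2 * int q)) \<in> model_carrier q" using q_pos by (auto simp: model_carrier_def)
  show ?thesis
    by (simp add: point_sym_eq c_in[OF m] e_c[OF m] sym_of_def)
      (rule dperm_cong, simp_all add: mod_mult_right_eq)
qed

lemma point_sym_c_AE: "point_sym Q op (c (AE b)) = dperm (int q, False)"
proof -
  have m: "AE b \<in> model_carrier q" by (simp add: model_carrier_def)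
  show ?thesis by (simp add: point_sym_eq c_in[OF m] e_c[OF m] sym_of_def)
qed

lemma subgroup_dperm_image:
  assumes "(0, False) \<in> P" "\<And>x y. x \<in> P \<Longrightarrow> y \<in> P \<Longrightarrow> dih_mul x y \<in> P"
    and "\<And>x. x \<in> P \<Longrightarrow> dih_inv x \<in> P"
  shows "subgroup (dperm ` P) (BijGroup Q)"
proof
  show "dperm ` P \<subseteq> carrier (BijGroup Q)" using dperm_Bij by (auto simp: BijGroup_def)
  show "\<one>\<^bsub>BijGroup Q\<^esub> \<in> dperm ` P" using assms(1) dperm_one by (metis image_eqI)
qed (use assms in \<open>auto simp: dperm_mult dperm_inv\<close>)

lemma dperm_mult_generate:
  "dperm d1 \<in> generate (BijGroup Q) S \<Longrightarrow> dperm d2 \<in> generate (BijGroup Q) S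
   \<Longrightarrow> dperm (dih_mul d1 d2) \<in> generate (BijGroup Q) S"
  by (metis generate.eng dperm_mult)

lemma dperm_even_Inn: "dperm (2 * k, s) \<in> generate (BijGroup Q) (point_sym Q op ` Q)"
proof -
  have reflection: "dperm (2 * k, True) \<in> generate (BijGroup Q) (point_sym Q op ` Q)" for k
  proof (rule generate.incl)
    have "c (TE (k mod (2 * int q))) \<in> Q" using q_pos by (intro c_in) (simp add: model_carrier_def)
    then show "dperm (2 * k, True) \<in> point_sym Q op ` Q" by (metis point_sym_c_TE image_eqI)
  qed
  show ?thesis
  proof (cases s)
    case False
    then show ?thesis using dperm_mult_generate[OF reflection[of k] reflection[of 0]] by (simp add: dih_mul_def)
  qed (simp add: reflection)
qed

lemma Inn_carrier_odd:
  assumes "odd q"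
  shows "generate (BijGroup Q) (point_sym Q op ` Q) = range dperm"
proof
  show "generate (BijGroup Q) (point_sym Q op ` Q) \<subseteq> range dperm"
    by (rule group.generate_subgroup_incl[OF group_BijGroup _ subgroup_dperm_image])
      (auto simp: point_sym_eq)
  show "range dperm \<subseteq> generate (BijGroup Q) (point_sym Q op ` Q)"
  proof clarify
    fix x s
    have half_turn: "dperm (int q, False) \<in> generate (BijGroup Q) (point_sym Q op ` Q)"
    proof (rule generate.incl)
      have "c (AE False) \<in> Q" by (intro c_in) (auto simp: model_carrier_def)
      then show "dperm (int q, False) \<in> point_sym Q op ` Q" by (metis point_sym_c_AE image_eqI)
    qed
    show "dperm (x, s) \<in> generate (BijGroup Q) (point_sym Q op ` Q)"
    proof (cases "even x")
      case True
      then obtain k where "x = 2 * k" by (rule evenE)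
      then show ?thesis using dperm_even_Inn by simp
    next
      case False
      then have "even (x - int q)" using assms by simp
      then obtain k where "x - int q = 2 * k" by (rule evenE)
      then have "(x, s) = dih_mul (int q, False) (2 * k, s)" by (simp add: dih_mul_def)
      then show ?thesis using dperm_mult_generate[OF half_turn dperm_even_Inn] by metis
    qed
  qed
qed

lemma Inn_carrier_even:
  assumes "even q"
  shows "generate (BijGroup Q) (point_sym Q op ` Q) = dperm ` half_dih q"
proof
  show "generate (BijGroup Q) (point_sym Q op ` Q) \<subseteq> dperm ` half_dih q"
    by (rule group.generate_subgroup_incl[OF group_BijGroup _ subgroup_dperm_image])
      (use assms in \<open>auto simp: point_sym_eq half_dih_def sym_of_def dih_mul_def dih_inv_def
          split: model_elt.splits\<close>)
  show "dperm ` half_dih q \<subseteq> generate (BijGroup Q) (point_sym Q op ` Q)"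
  proof clarify
    fix x s assume "(x, s) \<in> half_dih q"
    then have "even x" using assms by (auto simp: half_dih_def)
    then obtain k where "x = 2 * k" by (rule evenE)
    then show "dperm (x, s) \<in> generate (BijGroup Q) (point_sym Q op ` Q)"
      using dperm_even_Inn by simp
  qed
qed

lemma subgroup_dperm_half_dih: "subgroup (dperm ` half_dih q) (BijGroup Q)"
  by (rule subgroup_dperm_image) (auto simp: half_dih_def dih_mul_def dih_inv_def)

lemma Trans_carrier:
  "generate (BijGroup Q)
     {point_sym Q op x \<otimes>\<^bsub>BijGroup Q\<^esub> inv\<^bsub>BijGroup Q\<^esub> (point_sym Q op y) | x y. x \<in> Q \<and> y \<in> Q}
   = dperm ` half_dih q" (is "generate _ ?S = _")
proof
  show "generate (BijGroup Q) ?S \<subseteq> dperm ` half_dih q"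
  proof (rule group.generate_subgroup_incl[OF group_BijGroup _ subgroup_dperm_half_dih], clarify)
    fix x y assume "x \<in> Q" "y \<in> Q"
    then show "point_sym Q op x \<otimes>\<^bsub>BijGroup Q\<^esub> inv\<^bsub>BijGroup Q\<^esub> (point_sym Q op y) \<in> dperm ` half_dih q"
      by (auto simp: point_sym_eq dperm_inv dperm_mult half_dih_def sym_of_def dih_mul_def dih_inv_def
          split: model_elt.splits)
  qed
  show "dperm ` half_dih q \<subseteq> generate (BijGroup Q) ?S"
  proof clarify
    fix x s assume "(x, s) \<in> half_dih q"
    then have "even (x - (if s then int q else 0))" by (simp add: half_dih_def)
    then obtain k where "x - (if s then int q else 0) = 2 * k" by (rule evenE)
    then have x: "x = 2 * k + (if s then int q else 0)" by simp
    let ?x = "c (TE (k mod (2 * int q)))" and ?y = "c (if s then AE False else TE 0)"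
    have "dperm (x, s) = point_sym Q op ?x \<otimes>\<^bsub>BijGroup Q\<^esub> inv\<^bsub>BijGroup Q\<^esub> (point_sym Q op ?y)"
      using point_sym_c_TE[of k] point_sym_c_TE[of 0] point_sym_c_AE[of False]
      by (cases s) (simp_all add: x dperm_inv dperm_mult dih_mul_def dih_inv_def)
    moreover have "?x \<in> Q" "?y \<in> Q" using q_pos by (auto intro!: c_in)
    ultimately have "dperm (x, s) \<in> ?S" by blast
    then show "dperm (x, s) \<in> generate (BijGroup Q) ?S" by (rule generate.incl)
  qed
qed

lemma dperm_image_iso:
  assumes D: "group D"
    and hom: "\<And>d1 d2. d1 \<in> carrier D \<Longrightarrow> d2 \<in> carrier D \<Longrightarrow>
       dperm (emb (d1 \<otimes>\<^bsub>D\<^esub> d2)) = dperm (dih_mul (emb d1) (emb d2))"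
    and inj: "inj_on (dperm \<circ> emb) (carrier D)"
    and img: "(dperm \<circ> emb) ` carrier D = S"
  shows "BijGroup Q\<lparr>carrier := S\<rparr> \<cong> D"
proof (rule group.iso_sym[OF D], rule is_isoI, rule isoI)
  show "dperm \<circ> emb \<in> hom D (BijGroup Q\<lparr>carrier := S\<rparr>)"
    unfolding hom_def using img hom monoid.m_closed[OF group.is_monoid[OF D]] by (auto simp: dperm_mult)
  show "bij_betw (dperm \<circ> emb) (carrier D) (carrier (BijGroup Q\<lparr>carrier := S\<rparr>))"
    using inj img by (simp add: bij_betw_def)
qed

lemma Inn_iso_odd:
  assumes "odd q"
  shows "Inn_group Q op \<cong> dihedral_group (2 * q)"
  unfolding Inn_group_def Inn_carrier_odd[OF assms]
proof (rule dperm_image_iso[where emb = id])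
  show "group (dihedral_group (2 * q))" using q_pos by (simp add: group_dihedral_group)
  show "dperm (id (d1 \<otimes>\<^bsub>dihedral_group (2 * q)\<^esub> d2)) = dperm (dih_mul (id d1) (id d2))" for d1 d2
    by (cases d1; cases d2) (auto simp: dih_mul_def intro!: dperm_cong)
  show "inj_on (dperm \<circ> id) (carrier (dihedral_group (2 * q)))"
    by (rule inj_onI) (auto dest!: dperm_inj)
  show "(dperm \<circ> id) ` carrier (dihedral_group (2 * q)) = range dperm"
  proof safe
    fix x s
    have "dperm (x, s) = dperm (x mod (2 * int q), s)" by (rule dperm_cong) simp_all
    moreover have "(x mod (2 * int q), s) \<in> carrier (dihedral_group (2 * q))" using q_pos by simp
    ultimately show "dperm (x, s) \<in> (dperm \<circ> id) ` carrier (dihedral_group (2 * q))" by auto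
  qed auto
qed

lemma half_dih_iso: "BijGroup Q\<lparr>carrier := dperm ` half_dih q\<rparr> \<cong> dihedral_group q"
proof (rule dperm_image_iso[where emb = "half_dih_emb q"])
  show "group (dihedral_group q)" using q_pos by (rule group_dihedral_group)
  show "dperm (half_dih_emb q (d1 \<otimes>\<^bsub>dihedral_group q\<^esub> d2))
      = dperm (dih_mul (half_dih_emb q d1) (half_dih_emb q d2))" for d1 d2
  proof -
    obtain a s b t where d: "d1 = (a, s)" "d2 = (b, t)" by (cases d1; cases d2)
    let ?w = "if s then a - b else a + b" and ?z = "if s \<noteq> t then int q else 0"
    have emb_mult: "fst (half_dih_emb q (d1 \<otimes>\<^bsub>dihedral_group q\<^esub> d2)) = 2 * (?w mod int q) + ?z"
      using d by (simp add: half_dih_emb_def)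
    have mul_emb: "fst (dih_mul (half_dih_emb q d1) (half_dih_emb q d2)) = 2 * ?w + ?z"
      using d by (cases s; cases t) (simp_all add: half_dih_emb_def dih_mul_def algebra_simps)
    show ?thesis
      by (rule dperm_cong) (simp only: emb_mult mul_emb double_mod_add, simp add: d half_dih_emb_def dih_mul_def)
  qed
  show "inj_on (dperm \<circ> half_dih_emb q) (carrier (dihedral_group q))"
  proof (rule inj_onI)
    fix d1 d2 assume d: "d1 \<in> carrier (dihedral_group q)" "d2 \<in> carrier (dihedral_group q)"
      "(dperm \<circ> half_dih_emb q) d1 = (dperm \<circ> half_dih_emb q) d2"
    obtain a s b t where ab: "d1 = (a, s)" "d2 = (b, t)" by (cases d1; cases d2)
    let ?z = "if s then int q else 0"
    have "dperm (half_dih_emb q (a, s)) = dperm (half_dih_emb q (b, t))" using d(3) ab by simp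
    from dperm_inj[OF this, unfolded half_dih_emb_def fst_conv snd_conv]
    have "s = t" and m: "(2 * a + ?z) mod (2 * int q) = (2 * b + ?z) mod (2 * int q)" by auto
    have "(2 * a) mod (2 * int q) = ((2 * a + ?z) mod (2 * int q) - ?z) mod (2 * int q)"
      by (simp add: mod_diff_left_eq)
    also have "\<dots> = ((2 * b + ?z) mod (2 * int q) - ?z) mod (2 * int q)" by (simp only: m)
    also have "\<dots> = (2 * b) mod (2 * int q)" by (simp add: mod_diff_left_eq)
    finally have "a mod int q = b mod int q" by (simp add: mod_mult_mult1)
    then show "d1 = d2" using d(1,2) ab \<open>s = t\<close> by simp
  qed
  show "(dperm \<circ> half_dih_emb q) ` carrier (dihedral_group q) = dperm ` half_dih q"
  proof safe
    fix a s
    show "(dperm \<circ> half_dih_emb q) (a, s) \<in> dperm ` half_dih q"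
      by (auto simp: half_dih_emb_def half_dih_def)
  next
    fix x s assume "(x, s) \<in> half_dih q"
    then have "even (x - (if s then int q else 0))" by (simp add: half_dih_def)
    then obtain y where "x - (if s then int q else 0) = 2 * y" by (rule evenE)
    then have y: "x = 2 * y + (if s then int q else 0)" by simp
    have "dperm (x, s) = dperm (half_dih_emb q (y mod int q, s))"
      by (rule dperm_cong) (simp_all only: y half_dih_emb_def fst_conv snd_conv double_mod_add)
    moreover have "(y mod int q, s) \<in> carrier (dihedral_group q)" using q_pos by simp
    ultimately show "dperm (x, s) \<in> (dperm \<circ> half_dih_emb q) ` carrier (dihedral_group q)" by auto
  qed
qed

theorem Inn_Trans_iso:
  "Inn_group Q op \<cong> dihedral_group (2 * q div gcd 2 q) \<and> Trans_group Q op \<cong> dihedral_group q"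
proof
  show "Trans_group Q op \<cong> dihedral_group q"
    unfolding Trans_group_def Trans_carrier by (rule half_dih_iso)
  show "Inn_group Q op \<cong> dihedral_group (2 * q div gcd 2 q)"
  proof (cases "even q")
    case True
    then have "gcd 2 q = 2" by (simp add: gcd_nat.absorb1)
    then show ?thesis unfolding Inn_group_def Inn_carrier_even[OF True] using half_dih_iso by simp
  next
    case False
    then have "gcd 2 q = 1" by (metis coprime_iff_gcd_eq_1 coprime_left_2_iff_odd)
    then show ?thesis using Inn_iso_odd[OF False] by simp
  qed
qed

end

section \<open>Presentations of involutory quandles\<close>

lemma qterms_Gen [simp]: "Gen g \<in> qterms G \<longleftrightarrow> g \<in> G"
  by (simp add: qterms_def)

lemma qterms_Rt [simp]: "Rt x y \<in> qterms G \<longleftrightarrow> x \<in> qterms G \<and> y \<in> qterms G"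
  by (auto simp add: qterms_def)

lemma qterms_RtInv [simp]: "RtInv x y \<in> qterms G \<longleftrightarrow> x \<in> qterms G \<and> y \<in> qterms G"
  by (auto simp add: qterms_def)

lemma qcong_terms: "qcong G R s t \<Longrightarrow> s \<in> qterms G \<and> t \<in> qterms G"
  by (induction rule: qcong.induct) auto

declare qcong.trans [trans]

lemma qcong_Rt_left: "qcong G R x x' \<Longrightarrow> y \<in> qterms G \<Longrightarrow> qcong G R (Rt x y) (Rt x' y)"
  by (rule qcong.cong_Rt) (auto intro: qcong.refl)

lemma qcong_Rt_right: "x \<in> qterms G \<Longrightarrow> qcong G R y y' \<Longrightarrow> qcong G R (Rt x y) (Rt x y')"
  by (rule qcong.cong_Rt) (auto intro: qcong.refl)

lemma qcong_RtInv_left: "qcong G R x x' \<Longrightarrow> y \<in> qterms G \<Longrightarrow> qcong G R (RtInv x y) (RtInv x' y)"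
  by (rule qcong.cong_RtInv) (auto intro: qcong.refl)

lemma qcong_Rt_RtInv_distrib:
  assumes "x1 \<in> qterms G" "x2 \<in> qterms G" "z \<in> qterms G"
  shows "qcong G R (Rt (RtInv x1 x2) z) (RtInv (Rt x1 z) (Rt x2 z))"
proof -
  let ?w = "RtInv x1 x2"
  have "qcong G R (Rt x1 z) (Rt (Rt ?w x2) z)"
    by (rule qcong_Rt_left[OF qcong.sym[OF qcong.inv2]]) (use assms in auto)
  also have "qcong G R \<dots> (Rt (Rt ?w z) (Rt x2 z))" using assms by (intro qcong.dist) auto
  finally have "qcong G R (RtInv (Rt x1 z) (Rt x2 z)) (RtInv (Rt (Rt ?w z) (Rt x2 z)) (Rt x2 z))"
    using assms by (intro qcong_RtInv_left) auto
  also have "qcong G R \<dots> (Rt ?w z)" using assms by (intro qcong.inv1) auto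
  finally show ?thesis by (rule qcong.sym)
qed

lemma qcong_Rt_Rt_right:
  assumes "x \<in> qterms G" "y1 \<in> qterms G" "y2 \<in> qterms G"
  shows "qcong G R (Rt x (Rt y1 y2)) (Rt (Rt (RtInv x y2) y1) y2)"
proof -
  let ?w = "RtInv x y2"
  have "qcong G R (Rt x (Rt y1 y2)) (Rt (Rt ?w y2) (Rt y1 y2))"
    by (rule qcong_Rt_left[OF qcong.sym[OF qcong.inv2]]) (use assms in auto)
  also have "qcong G R \<dots> (Rt (Rt ?w y1) y2)" by (rule qcong.sym[OF qcong.dist]) (use assms in auto)
  finally show ?thesis .
qed

lemma qclass_eq: "qcong G R s t \<Longrightarrow> qclass G R s = qclass G R t"
  unfolding qclass_def by (auto intro: qcong.trans qcong.sym)

lemma qcong_some_qclass: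
  assumes "t \<in> qterms G"
  shows "qcong G R t (SOME s. s \<in> qclass G R t)"
proof -
  have "t \<in> qclass G R t" using assms by (simp add: qclass_def qcong.refl)
  then have "(SOME s. s \<in> qclass G R t) \<in> qclass G R t" by (rule someI)
  then show ?thesis by (simp add: qclass_def)
qed

lemma pres_op_qclass:
  assumes "s \<in> qterms G" "t \<in> qterms G"
  shows "pres_op G R (qclass G R s) (qclass G R t) = qclass G R (Rt s t)"
proof -
  have "qcong G R (Rt s t) (Rt (SOME x. x \<in> qclass G R s) (SOME x. x \<in> qclass G R t))"
    using assms by (intro qcong.cong_Rt qcong_some_qclass)
  then show ?thesis by (simp add: pres_op_def qclass_eq)
qed

locale invol_presentation =
  fixes G :: "'g set" and R :: "('g qterm \<times> 'g qterm) set"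
  assumes invol_rels_subset: "invol_rels G \<subseteq> R"
begin

abbreviation qeq (infix "\<doteq>" 50) where "s \<doteq> t \<equiv> qcong G R s t"

definition acts_invol :: "'g qterm \<Rightarrow> bool" where
  "acts_invol y \<longleftrightarrow> (\<forall>x \<in> qterms G. Rt (Rt x y) y \<doteq> x)"

lemma acts_invol_RtInv:
  assumes "acts_invol y" "x \<in> qterms G" "y \<in> qterms G"
  shows "RtInv x y \<doteq> Rt x y"
proof -
  have "RtInv x y \<doteq> RtInv (Rt (Rt x y) y) y"
    by (rule qcong_RtInv_left[OF qcong.sym]) (use assms in \<open>auto simp: acts_invol_def\<close>)
  also have "\<dots> \<doteq> Rt x y" using assms by (intro qcong.inv1) auto
  finally show ?thesis .
qed

lemma acts_invol_Gen:
  assumes "g \<in> G"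
  shows "acts_invol (Gen g)"
  unfolding acts_invol_def
proof
  fix x assume "x \<in> qterms G"
  then show "Rt (Rt x (Gen g)) (Gen g) \<doteq> x"
  proof (induction x)
    case (Gen h)
    then show ?case using assms invol_rels_subset by (intro qcong.rel) (auto simp: invol_rels_def)
  next
    case (Rt x1 x2)
    let ?g = "Gen g"
    have "Rt (Rt (Rt x1 x2) ?g) ?g \<doteq> Rt (Rt (Rt x1 ?g) (Rt x2 ?g)) ?g"
      using Rt assms by (intro qcong_Rt_left qcong.dist) auto
    also have "\<dots> \<doteq> Rt (Rt (Rt x1 ?g) ?g) (Rt (Rt x2 ?g) ?g)"
      using Rt assms by (intro qcong.dist) auto
    also have "\<dots> \<doteq> Rt x1 x2" using Rt by (intro qcong.cong_Rt) auto
    finally show ?case .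
  next
    case (RtInv x1 x2)
    let ?g = "Gen g"
    have "Rt (Rt (RtInv x1 x2) ?g) ?g \<doteq> Rt (RtInv (Rt x1 ?g) (Rt x2 ?g)) ?g"
      using RtInv assms by (intro qcong_Rt_left qcong_Rt_RtInv_distrib) auto
    also have "\<dots> \<doteq> RtInv (Rt (Rt x1 ?g) ?g) (Rt (Rt x2 ?g) ?g)"
      using RtInv assms by (intro qcong_Rt_RtInv_distrib) auto
    also have "\<dots> \<doteq> RtInv x1 x2" using RtInv by (intro qcong.cong_RtInv) auto
    finally show ?case .
  qed
qed

lemma acts_invol_Rt:
  assumes "acts_invol y1" "acts_invol y2" "y1 \<in> qterms G" "y2 \<in> qterms G"
  shows "acts_invol (Rt y1 y2)"
  unfolding acts_invol_def
proof
  fix x assume x: "x \<in> qterms G"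
  let ?T = "\<lambda>x. Rt (Rt (Rt x y2) y1) y2"
  have T: "Rt z (Rt y1 y2) \<doteq> ?T z" if "z \<in> qterms G" for z
  proof -
    have "Rt z (Rt y1 y2) \<doteq> Rt (Rt (RtInv z y2) y1) y2"
      using that assms by (intro qcong_Rt_Rt_right) auto
    also have "\<dots> \<doteq> ?T z" using that assms by (intro qcong_Rt_left acts_invol_RtInv) auto
    finally show ?thesis .
  qed
  have "Rt (Rt x (Rt y1 y2)) (Rt y1 y2) \<doteq> ?T (Rt x (Rt y1 y2))" using x assms by (intro T) auto
  also have "\<dots> \<doteq> ?T (?T x)" using x assms by (intro qcong_Rt_left T) auto
  also have "\<dots> \<doteq> Rt (Rt (Rt (Rt x y2) y1) y1) y2"
    using x assms by (intro qcong_Rt_left) (auto simp: acts_invol_def)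
  also have "\<dots> \<doteq> Rt (Rt x y2) y2"
    using x assms by (intro qcong_Rt_left) (auto simp: acts_invol_def)
  also have "\<dots> \<doteq> x" using x assms by (auto simp: acts_invol_def)
  finally show "Rt (Rt x (Rt y1 y2)) (Rt y1 y2) \<doteq> x" .
qed

lemma acts_invol_cong:
  assumes "acts_invol y" "y \<doteq> y'"
  shows "acts_invol y'"
  unfolding acts_invol_def
proof
  fix x assume x: "x \<in> qterms G"
  have "Rt (Rt x y') y' \<doteq> Rt (Rt x y) y"
    by (rule qcong.cong_Rt[OF qcong_Rt_right[OF x qcong.sym[OF assms(2)]] qcong.sym[OF assms(2)]])
  also have "\<dots> \<doteq> x" using x assms(1) by (auto simp: acts_invol_def)
  finally show "Rt (Rt x y') y' \<doteq> x" .
qed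

lemma acts_invol_all: "y \<in> qterms G \<Longrightarrow> acts_invol y"
proof (induction y)
  case (Gen g) then show ?case by (auto intro: acts_invol_Gen)
next
  case (Rt y1 y2) then show ?case by (auto intro: acts_invol_Rt)
next
  case (RtInv y1 y2)
  then have "acts_invol (Rt y1 y2)" by (auto intro: acts_invol_Rt)
  moreover have "Rt y1 y2 \<doteq> RtInv y1 y2" by (rule qcong.sym[OF acts_invol_RtInv]) (use RtInv in auto)
  ultimately show ?case by (rule acts_invol_cong)
qed

lemma qcong_Rt_Rt_cancel: "x \<in> qterms G \<Longrightarrow> y \<in> qterms G \<Longrightarrow> Rt (Rt x y) y \<doteq> x"
  using acts_invol_all by (auto simp: acts_invol_def)

lemma qcong_RtInv_Rt: "x \<in> qterms G \<Longrightarrow> y \<in> qterms G \<Longrightarrow> RtInv x y \<doteq> Rt x y"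
  using acts_invol_all acts_invol_RtInv by blast

end

section \<open>The presentation of Q_2(T_{2,q} \<union> A)\<close>

definition Q2_TA_rels :: "nat \<Rightarrow> (arc qterm \<times> arc qterm) set" where
  "Q2_TA_rels q = TA_rels q \<union> invol_rels (TA_gens q)"

lemma TA_gens_ArcT [simp]: "ArcT k \<in> TA_gens q \<longleftrightarrow> k \<le> q + 1"
  by (auto simp: TA_gens_def)

lemma TA_gens_ArcA [simp]: "ArcA i \<in> TA_gens q \<longleftrightarrow> i \<le> 1"
  by (auto simp: TA_gens_def)

fun TA_eval :: "nat \<Rightarrow> arc qterm \<Rightarrow> model_elt" where
  "TA_eval q (Gen (ArcT k)) = TE (int k mod (2 * int q))"
| "TA_eval q (Gen (ArcA i)) = AE (i \<noteq> 0)"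
| "TA_eval q (Rt x y) = model_op q (TA_eval q x) (TA_eval q y)"
| "TA_eval q (RtInv x y) = model_op q (TA_eval q x) (TA_eval q y)"

lemma TA_eval_closed: "q > 0 \<Longrightarrow> TA_eval q t \<in> model_carrier q"
  by (cases "(q, t)" rule: TA_eval.cases) (auto simp: model_op_closed)

lemma TA_eval_TA_rels:
  assumes "(s, t) \<in> TA_rels q"
  shows "TA_eval q s = TA_eval q t"
  using assms unfolding TA_rels_def
proof (elim UnE CollectE exE conjE insertE emptyE)
  fix k assume st: "(s, t) = (Gen (ArcT (k + 1)), Rt (Gen (ArcT (k - 1))) (Gen (ArcT k)))"
    and k: "1 \<le> k"
  have "(2 * (int k mod (2 * int q)) - int (k - 1) mod (2 * int q)) mod (2 * int q)
        = (2 * int k - int (k - 1)) mod (2 * int q)"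
    by (metis mod_diff_left_eq mod_diff_right_eq mod_mult_right_eq)
  also have "\<dots> = int (k + 1) mod (2 * int q)" using k by (simp add: of_nat_diff add.commute)
  finally show ?thesis using st by (simp add: model_op_def sym_of_def dih_act_def)
next
  assume "(s, t) = (Gen (ArcT 1), Rt (Gen (ArcT (q + 1))) (Gen (ArcA 0)))"
  moreover have "(int q + (1 + int q) mod (2 * int q)) mod (2 * int q) = 1 mod (2 * int q)"
  proof -
    have "(int q + (1 + int q) mod (2 * int q)) mod (2 * int q) = (int q + (1 + int q)) mod (2 * int q)"
      by (rule mod_add_right_eq)
    also have "int q + (1 + int q) = 1 + 1 * (2 * int q)" by simp
    finally show ?thesis by (metis mod_mult_self1)
  qed
  ultimately show ?thesis by (simp add: model_op_def sym_of_def dih_act_def)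
next
  assume "(s, t) = (Gen (ArcT 0), Rt (Gen (ArcT q)) (Gen (ArcA 0)))"
  moreover have "(int q + int q mod (2 * int q)) mod (2 * int q) = 0"
  proof -
    have "(int q + int q mod (2 * int q)) mod (2 * int q) = (int q + int q) mod (2 * int q)"
      by (rule mod_add_right_eq)
    then show ?thesis by simp
  qed
  ultimately show ?thesis by (simp add: model_op_def sym_of_def dih_act_def)
qed (simp_all add: model_op_def sym_of_def dih_act_def)

lemma TA_eval_qcong:
  assumes "q > 0" and "qcong (TA_gens q) (Q2_TA_rels q) s t"
  shows "TA_eval q s = TA_eval q t"
  using assms(2)
proof (induction rule: qcong.induct)
  case (rel s t)
  then consider "(s, t) \<in> TA_rels q" | x y where "s = Rt (Rt (Gen x) (Gen y)) (Gen y)" "t = Gen x"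
    by (auto simp: Q2_TA_rels_def invol_rels_def)
  then show ?case
  proof cases
    case 1 then show ?thesis by (rule TA_eval_TA_rels)
  next
    case 2 then show ?thesis using model_op_invol[OF TA_eval_closed[OF assms(1)]] by simp
  qed
next
  case (dist x y z)
  show ?case by (simp only: TA_eval.simps) (rule model_op_dist)
qed (simp_all add: model_op_idem model_op_invol TA_eval_closed assms)

text \<open>Normal forms: the arc a_j for j \<le> q + 1, and a_{j-q} \<rhd> c_0 for the remaining T-elements.\<close>

definition TA_rep :: "nat \<Rightarrow> model_elt \<Rightarrow> arc qterm" where
  "TA_rep q m = (case m of
      TE j \<Rightarrow> if j \<le> int q + 1 then Gen (ArcT (nat j)) else Rt (Gen (ArcT (nat (j - int q)))) (Gen (ArcA 0))
    | AE b \<Rightarrow> Gen (ArcA (if b then 1 else 0)))"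

definition class_value :: "nat \<Rightarrow> arc qterm set \<Rightarrow> model_elt" where
  "class_value q U = TA_eval q (SOME t. t \<in> U)"

definition value_class :: "nat \<Rightarrow> model_elt \<Rightarrow> arc qterm set" where
  "value_class q m = qclass (TA_gens q) (Q2_TA_rels q) (TA_rep q m)"

locale TA_diagram =
  fixes q :: nat
  assumes q_gt_2: "q > 2"
begin

sublocale invol_presentation "TA_gens q" "Q2_TA_rels q"
  by unfold_locales (simp add: Q2_TA_rels_def)

abbreviation TA_qeq (infix "\<doteq>" 50) where "s \<doteq> t \<equiv> qcong (TA_gens q) (Q2_TA_rels q) s t"

abbreviation GT :: "nat \<Rightarrow> arc qterm" where "GT k \<equiv> Gen (ArcT k)"
abbreviation GA :: "nat \<Rightarrow> arc qterm" where "GA i \<equiv> Gen (ArcA i)"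

lemma q_pos: "q > 0"
  using q_gt_2 by simp

lemma twist_rel: "1 \<le> k \<Longrightarrow> k \<le> q \<Longrightarrow> GT (k + 1) \<doteq> Rt (GT (k - 1)) (GT k)"
  by (rule qcong.rel) (auto simp: Q2_TA_rels_def TA_rels_def)
lemma axis_rel_1: "GA 1 \<doteq> Rt (GA 0) (GT (q + 1))"
  by (rule qcong.rel) (auto simp: Q2_TA_rels_def TA_rels_def)
lemma axis_rel_0: "GA 0 \<doteq> Rt (GA 1) (GT q)"
  by (rule qcong.rel) (auto simp: Q2_TA_rels_def TA_rels_def)
lemma belt_rel_1: "GT 1 \<doteq> Rt (GT (q + 1)) (GA 0)"
  by (rule qcong.rel) (auto simp: Q2_TA_rels_def TA_rels_def)
lemma belt_rel_0: "GT 0 \<doteq> Rt (GT q) (GA 0)"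
  by (rule qcong.rel) (auto simp: Q2_TA_rels_def TA_rels_def)

definition tnf :: "int \<Rightarrow> arc qterm" where
  "tnf k = TA_rep q (TE (k mod (2 * int q)))"

lemma tnf_cong: "x mod (2 * int q) = y mod (2 * int q) \<Longrightarrow> tnf x = tnf y"
  by (simp add: tnf_def)

lemma tnf_small: "0 \<le> k \<Longrightarrow> k \<le> int q + 1 \<Longrightarrow> tnf k = GT (nat k)"
  using q_gt_2 by (simp add: tnf_def TA_rep_def)

lemma tnf_big: "int q + 2 \<le> k \<Longrightarrow> k < 2 * int q \<Longrightarrow> tnf k = Rt (GT (nat (k - int q))) (GA 0)"
  using q_gt_2 by (simp add: tnf_def TA_rep_def)

lemma tnf_terms: "tnf k \<in> qterms (TA_gens q)"
proof -
  have "0 \<le> k mod (2 * int q)" "k mod (2 * int q) < 2 * int q" using q_pos by simp_all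
  then show ?thesis by (auto simp: tnf_def TA_rep_def nat_le_iff)
qed

lemma tnf_add_q:
  assumes "j \<le> q + 1"
  shows "tnf (int j + int q) \<doteq> Rt (GT j) (GA 0)"
proof -
  consider "j = 0" | "j = 1" | "2 \<le> j \<and> j \<le> q - 1" | "j = q" | "j = q + 1" using assms by linarith
  then show ?thesis
  proof cases
    case 1
    have "GT q \<doteq> Rt (Rt (GT q) (GA 0)) (GA 0)" by (rule qcong.sym[OF qcong_Rt_Rt_cancel]) simp_all
    also have "\<dots> \<doteq> Rt (GT 0) (GA 0)" by (rule qcong_Rt_left[OF qcong.sym[OF belt_rel_0]]) simp
    finally show ?thesis using 1 by (simp add: tnf_small)
  next
    case 2
    have "GT (q + 1) \<doteq> Rt (Rt (GT (q + 1)) (GA 0)) (GA 0)" by (rule qcong.sym[OF qcong_Rt_Rt_cancel]) simp_all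
    also have "\<dots> \<doteq> Rt (GT 1) (GA 0)" by (rule qcong_Rt_left[OF qcong.sym[OF belt_rel_1]]) simp
    finally have "GT (q + 1) \<doteq> Rt (GT 1) (GA 0)" .
    moreover have "tnf (int j + int q) = GT (q + 1)" using 2 tnf_small[of "int q + 1"] by (simp add: add.commute)
    ultimately show ?thesis using 2 by simp
  next
    case 3
    then show ?thesis using q_gt_2 by (subst tnf_big) (auto intro: qcong.refl)
  next
    case 4
    have "tnf (int j + int q) = tnf 0" using 4 by (intro tnf_cong) simp
    also have "\<dots> = GT 0" by (simp add: tnf_small)
    finally show ?thesis using 4 belt_rel_0 by simp
  next
    case 5
    have "tnf (int j + int q) = tnf 1" using 5 by (intro tnf_cong) simp
    also have "\<dots> = GT 1" by (simp add: tnf_small)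
    finally show ?thesis using 5 belt_rel_1 by simp
  qed
qed


lemma tnf_succ_core:
  assumes "1 \<le> k" "k \<le> 2 * int q"
  shows "tnf (k + 1) \<doteq> Rt (tnf (k - 1)) (tnf k)"
proof (cases "k \<le> int q")
  case True
  define n where "n = nat k"
  have k: "k = int n" using assms n_def by simp
  have n: "1 \<le> n" "n \<le> q" using assms True k by simp_all
  have "tnf (k + 1) = GT (n + 1)" using k n by (subst tnf_small) auto
  moreover have "tnf (k - 1) = GT (n - 1)" using k n by (subst tnf_small) auto
  moreover have "tnf k = GT n" using k n by (subst tnf_small) auto
  ultimately show ?thesis using twist_rel[OF n] by simp
next
  case False
  define m where "m = nat (k - int q)"
  have k: "k = int m + int q" using False m_def by simp
  have m: "1 \<le> m" "m \<le> q" using assms False k by simp_all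
  have a: "tnf (k - 1) \<doteq> Rt (GT (m - 1)) (GA 0)"
    using tnf_add_q[of "m - 1"] m k by (simp add: of_nat_diff algebra_simps)
  have b: "tnf k \<doteq> Rt (GT m) (GA 0)" using tnf_add_q[of m] m k by simp
  have c: "tnf (k + 1) \<doteq> Rt (GT (m + 1)) (GA 0)"
    using tnf_add_q[of "m + 1"] m k by (simp add: algebra_simps)
  have "tnf (k + 1) \<doteq> Rt (GT (m + 1)) (GA 0)" by (rule c)
  also have "\<dots> \<doteq> Rt (Rt (GT (m - 1)) (GT m)) (GA 0)" by (rule qcong_Rt_left[OF twist_rel[OF m]]) simp
  also have "\<dots> \<doteq> Rt (Rt (GT (m - 1)) (GA 0)) (Rt (GT m) (GA 0))" by (rule qcong.dist) (use m in auto)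
  also have "\<dots> \<doteq> Rt (tnf (k - 1)) (tnf k)" by (rule qcong.cong_Rt[OF qcong.sym[OF a] qcong.sym[OF b]])
  finally show ?thesis .
qed

text \<open>The indices are given by equations so that the rule unifies with any form of k + 1 and k - 1.\<close>

lemma tnf_succ:
  assumes "k' = k + 1" "k'' = k - 1"
  shows "tnf k' \<doteq> Rt (tnf k'') (tnf k)"
proof -
  define k0 where "k0 = (k - 1) mod (2 * int q) + 1"
  have "(k - 1) mod (2 * int q) < 2 * int q" "0 \<le> (k - 1) mod (2 * int q)" using q_pos by simp_all
  then have r: "1 \<le> k0" "k0 \<le> 2 * int q" unfolding k0_def by linarith+
  have e0: "tnf k0 = tnf k"
    by (rule tnf_cong) (simp add: k0_def mod_add_left_eq)
  have e1: "tnf (k0 + 1) = tnf k'"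
  proof (rule tnf_cong)
    have "(k0 + 1) mod (2 * int q) = ((k - 1) mod (2 * int q) + 2) mod (2 * int q)"
      by (simp add: k0_def add.assoc)
    also have "\<dots> = (k - 1 + 2) mod (2 * int q)" by (rule mod_add_left_eq)
    finally show "(k0 + 1) mod (2 * int q) = k' mod (2 * int q)" using assms by (simp add: add.commute)
  qed
  have e2: "tnf (k0 - 1) = tnf k''"
    by (rule tnf_cong) (simp add: assms k0_def)
  show ?thesis using tnf_succ_core[OF r] e0 e1 e2 by simp
qed

lemma tnf_Rt_aux:
  "Rt (tnf (j + int m)) (tnf j) \<doteq> tnf (j - int m)
   \<and> Rt (tnf (j + int (m + 1))) (tnf j) \<doteq> tnf (j - int (m + 1))"
proof (induction m arbitrary: j)
  case 0
  have "Rt (tnf j) (tnf j) \<doteq> tnf j" by (rule qcong.idem) (rule tnf_terms)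
  moreover have "Rt (tnf (j + 1)) (tnf j) \<doteq> tnf (j - 1)"
  proof -
    have "Rt (tnf (j + 1)) (tnf j) \<doteq> Rt (Rt (tnf (j - 1)) (tnf j)) (tnf j)"
      by (rule qcong_Rt_left[OF tnf_succ]) (simp_all add: tnf_terms)
    also have "\<dots> \<doteq> tnf (j - 1)" by (rule qcong_Rt_Rt_cancel) (simp_all add: tnf_terms)
    finally show ?thesis .
  qed
  ultimately show ?case by simp
next
  case (Suc m)
  have IH1: "Rt (tnf (j + int m)) (tnf j) \<doteq> tnf (j - int m)"
   and IH2: "Rt (tnf (j + int m + 1)) (tnf j) \<doteq> tnf (j - int m - 1)"
    using Suc.IH[of j] by (simp_all add: algebra_simps)
  have "Rt (tnf (j + int m + 2)) (tnf j) \<doteq> Rt (Rt (tnf (j + int m)) (tnf (j + int m + 1))) (tnf j)"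
    by (rule qcong_Rt_left[OF tnf_succ]) (simp_all add: tnf_terms)
  also have "\<dots> \<doteq> Rt (Rt (tnf (j + int m)) (tnf j)) (Rt (tnf (j + int m + 1)) (tnf j))"
    by (rule qcong.dist) (simp_all add: tnf_terms)
  also have "\<dots> \<doteq> Rt (tnf (j - int m)) (tnf (j - int m - 1))"
    by (rule qcong.cong_Rt[OF IH1 IH2])
  also have "\<dots> \<doteq> Rt (Rt (tnf (j - int m - 2)) (tnf (j - int m - 1))) (tnf (j - int m - 1))"
    by (rule qcong_Rt_left[OF tnf_succ]) (simp_all add: tnf_terms)
  also have "\<dots> \<doteq> tnf (j - int m - 2)" by (rule qcong_Rt_Rt_cancel) (simp_all add: tnf_terms)
  finally have "Rt (tnf (j + int m + 2)) (tnf j) \<doteq> tnf (j - int m - 2)" .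
  moreover have "Rt (tnf (j + int (Suc m))) (tnf j) \<doteq> tnf (j - int (Suc m))"
    using IH2 by (simp add: algebra_simps)
  ultimately show ?case by (simp add: algebra_simps)
qed

lemma tnf_Rt: "Rt (tnf i) (tnf j) \<doteq> tnf (2 * j - i)"
proof (cases "j \<le> i")
  case True
  define m where "m = nat (i - j)"
  have e: "j + int m = i" "j - int m = 2 * j - i" using True m_def by simp_all
  have "Rt (tnf (j + int m)) (tnf j) \<doteq> tnf (j - int m)" using tnf_Rt_aux[of j m] by blast
  then show ?thesis by (simp only: e)
next
  case False
  define m where "m = nat (j - i)"
  have im: "i = j - int m" "2 * j - i = j + int m" using False m_def by simp_all
  have "Rt (tnf i) (tnf j) \<doteq> Rt (Rt (tnf (j + int m)) (tnf j)) (tnf j)"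
    unfolding im by (rule qcong_Rt_left[OF qcong.sym]) (use tnf_Rt_aux[of j m] in \<open>simp_all add: tnf_terms\<close>)
  also have "\<dots> \<doteq> tnf (j + int m)" by (rule qcong_Rt_Rt_cancel) (simp_all add: tnf_terms)
  finally have "Rt (tnf i) (tnf j) \<doteq> tnf (j + int m)" .
  then show ?thesis by (simp only: im(2))
qed


lemma axis0_Rt_Rt:
  assumes "k \<le> q"
  shows "Rt (Rt (GA 0) (GT (k + 1))) (GT k) \<doteq> GA 0"
  using assms
proof (induction k rule: inc_induct)
  case base
  have "Rt (Rt (GA 0) (GT (q + 1))) (GT q) \<doteq> Rt (GA 1) (GT q)"
    by (rule qcong_Rt_left[OF qcong.sym[OF axis_rel_1]]) simp
  also have "\<dots> \<doteq> GA 0" by (rule qcong.sym[OF axis_rel_0])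
  finally show ?case .
next
  case (step k)
  have IH: "Rt (Rt (GA 0) (GT (k + 2))) (GT (k + 1)) \<doteq> GA 0" using step.IH by simp
  have t: "GT k \<in> qterms (TA_gens q)" "GT (k + 1) \<in> qterms (TA_gens q)"
    using step.hyps by simp_all
  have "Rt (GA 0) (GT (k + 2)) \<doteq> Rt (GA 0) (Rt (GT k) (GT (k + 1)))"
    by (rule qcong_Rt_right) (use twist_rel[of "k + 1"] step.hyps in simp_all)
  also have "\<dots> \<doteq> Rt (Rt (RtInv (GA 0) (GT (k + 1))) (GT k)) (GT (k + 1))"
    by (rule qcong_Rt_Rt_right) (use t in simp_all)
  also have "\<dots> \<doteq> Rt (Rt (Rt (GA 0) (GT (k + 1))) (GT k)) (GT (k + 1))"
    by (rule qcong_Rt_left[OF qcong_Rt_left[OF qcong_RtInv_Rt]]) (use t in simp_all)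
  finally have A: "Rt (GA 0) (GT (k + 2)) \<doteq> Rt (Rt (Rt (GA 0) (GT (k + 1))) (GT k)) (GT (k + 1))" .
  have "GA 0 \<doteq> Rt (Rt (GA 0) (GT (k + 2))) (GT (k + 1))" by (rule qcong.sym[OF IH])
  also have "\<dots> \<doteq> Rt (Rt (Rt (Rt (GA 0) (GT (k + 1))) (GT k)) (GT (k + 1))) (GT (k + 1))"
    by (rule qcong_Rt_left[OF A]) (use t in simp)
  also have "\<dots> \<doteq> Rt (Rt (GA 0) (GT (k + 1))) (GT k)" by (rule qcong_Rt_Rt_cancel) (use t in simp_all)
  finally show ?case by (rule qcong.sym)
qed

lemma axis0_Rt_arc:
  assumes "k \<le> q + 1"
  shows "Rt (GA 0) (GT k) \<doteq> GA 1"
  using assms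
proof (induction k rule: inc_induct)
  case base
  show ?case by (rule qcong.sym[OF axis_rel_1])
next
  case (step k)
  have t: "GT k \<in> qterms (TA_gens q)" using step.hyps by simp
  have "Rt (GA 1) (GT k) \<doteq> Rt (Rt (GA 0) (GT (k + 1))) (GT k)"
    by (rule qcong_Rt_left[OF qcong.sym]) (use step.IH t in simp_all)
  also have "\<dots> \<doteq> GA 0" by (rule axis0_Rt_Rt) (use step.hyps in simp)
  finally have "Rt (GA 1) (GT k) \<doteq> GA 0" .
  then have "Rt (GA 0) (GT k) \<doteq> Rt (Rt (GA 1) (GT k)) (GT k)"
    by (rule qcong_Rt_left[OF qcong.sym]) (use t in simp)
  also have "\<dots> \<doteq> GA 1" by (rule qcong_Rt_Rt_cancel) (use t in simp_all)
  finally show ?case .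
qed

lemma axis1_Rt_arc:
  assumes "k \<le> q + 1"
  shows "Rt (GA 1) (GT k) \<doteq> GA 0"
proof -
  have "Rt (GA 1) (GT k) \<doteq> Rt (Rt (GA 0) (GT k)) (GT k)"
    by (rule qcong_Rt_left[OF qcong.sym[OF axis0_Rt_arc[OF assms]]]) (use assms in simp)
  also have "\<dots> \<doteq> GA 0" by (rule qcong_Rt_Rt_cancel) (use assms in simp_all)
  finally show ?thesis .
qed

lemma axis1_Rt_axis0: "Rt (GA 1) (GA 0) \<doteq> GA 1"
proof -
  have "Rt (GA 1) (GA 0) \<doteq> Rt (Rt (GA 0) (GT (q + 1))) (GA 0)" by (rule qcong_Rt_left[OF axis_rel_1]) simp
  also have "\<dots> \<doteq> Rt (Rt (GA 0) (GA 0)) (Rt (GT (q + 1)) (GA 0))" by (rule qcong.dist) simp_all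
  also have "\<dots> \<doteq> Rt (GA 0) (GT 1)" by (rule qcong.cong_Rt[OF qcong.idem qcong.sym[OF belt_rel_1]]) simp
  also have "\<dots> \<doteq> GA 1" by (rule axis0_Rt_arc) simp
  finally show ?thesis .
qed

lemma TA_rep_TE: "0 \<le> i \<Longrightarrow> i < 2 * int q \<Longrightarrow> TA_rep q (TE i) = tnf i"
  by (simp add: tnf_def)

lemma TA_rep_terms: "u \<in> model_carrier q \<Longrightarrow> TA_rep q u \<in> qterms (TA_gens q)"
  by (erule model_carrier_cases) (auto simp add: TA_rep_def nat_le_iff)

lemma TA_eval_rep: "u \<in> model_carrier q \<Longrightarrow> TA_eval q (TA_rep q u) = u"
proof (erule model_carrier_cases)
  fix i assume u: "u = TE i" and i: "0 \<le> i" "i < 2 * int q"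
  show "TA_eval q (TA_rep q u) = u"
  proof (cases "i \<le> int q + 1")
    case True then show ?thesis using u i by (simp add: TA_rep_def)
  next
    case False
    have m: "(i - int q) mod (2 * int q) = i - int q" using False i by simp
    have "(int q + (i - int q)) mod (2 * int q) = i" using i by simp
    then show ?thesis using u False m by (simp add: TA_rep_def model_op_def sym_of_def dih_act_def)
  qed
next
  fix b assume "u = AE b" then show "TA_eval q (TA_rep q u) = u" by (simp add: TA_rep_def)
qed

definition acts_normally :: "arc qterm \<Rightarrow> bool" where
  "acts_normally y \<longleftrightarrow> y \<in> qterms (TA_gens q) \<and> (\<forall>u \<in> model_carrier q. Rt (TA_rep q u) y \<doteq> TA_rep q (model_op q u (TA_eval q y)))"

lemma acts_normally_arcT: "k \<le> q + 1 \<Longrightarrow> acts_normally (GT k)"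
  unfolding acts_normally_def
proof (intro conjI ballI)
  assume k: "k \<le> q + 1"
  then show "GT k \<in> qterms (TA_gens q)" by simp
  fix u assume "u \<in> model_carrier q"
  then show "Rt (TA_rep q u) (GT k) \<doteq> TA_rep q (model_op q u (TA_eval q (GT k)))"
  proof (rule model_carrier_cases)
    fix i assume u: "u = TE i" and i: "0 \<le> i" "i < 2 * int q"
    have "model_op q u (TA_eval q (GT k)) = TE ((2 * (int k mod (2 * int q)) - i) mod (2 * int q))"
      using u by (simp add: model_op_def sym_of_def dih_act_def)
    then have "TA_rep q (model_op q u (TA_eval q (GT k))) = tnf (2 * (int k mod (2 * int q)) - i)" by (simp add: tnf_def)
    also have "\<dots> = tnf (2 * int k - i)"
    proof (rule tnf_cong)
      have "(2 * (int k mod (2 * int q)) - i) mod (2 * int q) = ((2 * (int k mod (2 * int q))) mod (2 * int q) - i) mod (2 * int q)"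
        by (rule mod_diff_left_eq[symmetric])
      also have "(2 * (int k mod (2 * int q))) mod (2 * int q) = (2 * int k) mod (2 * int q)"
        by (rule mod_mult_right_eq)
      also have "((2 * int k) mod (2 * int q) - i) mod (2 * int q) = (2 * int k - i) mod (2 * int q)"
        by (rule mod_diff_left_eq)
      finally show "(2 * (int k mod (2 * int q)) - i) mod (2 * int q) = (2 * int k - i) mod (2 * int q)" .
    qed
    finally have e: "TA_rep q (model_op q u (TA_eval q (GT k))) = tnf (2 * int k - i)" .
    have "GT k = tnf (int k)" using k by (simp add: tnf_small)
    then show ?thesis using tnf_Rt[of i "int k"] e u i by (simp add: TA_rep_TE)
  next
    fix b assume u: "u = AE b"
    show ?thesis
    proof (cases b)
      case True then show ?thesis using u axis1_Rt_arc[OF k] by (simp add: model_op_def sym_of_def dih_act_def TA_rep_def)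
    next
      case False then show ?thesis using u axis0_Rt_arc[OF k] by (simp add: model_op_def sym_of_def dih_act_def TA_rep_def)
    qed
  qed
qed

lemma acts_normally_axis0: "acts_normally (GA 0)"
  unfolding acts_normally_def
proof (intro conjI ballI)
  show "GA 0 \<in> qterms (TA_gens q)" by simp
  fix u assume "u \<in> model_carrier q"
  then show "Rt (TA_rep q u) (GA 0) \<doteq> TA_rep q (model_op q u (TA_eval q (GA 0)))"
  proof (rule model_carrier_cases)
    fix i assume u: "u = TE i" and i: "0 \<le> i" "i < 2 * int q"
    have e: "TA_rep q (model_op q u (TA_eval q (GA 0))) = tnf (int q + i)"
      using u by (simp add: model_op_def sym_of_def dih_act_def tnf_def)
    show ?thesis
    proof (cases "i \<le> int q + 1")
      case True
      define n where "n = nat i"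
      have n: "i = int n" "n \<le> q + 1" using True i n_def by simp_all
      have "TA_rep q u = GT n" using u n by (simp add: TA_rep_def)
      moreover have "tnf (int q + i) \<doteq> Rt (GT n) (GA 0)" using tnf_add_q[OF n(2)] n by (simp add: add.commute)
      ultimately show ?thesis using e by (simp add: qcong.sym)
    next
      case False
      have ru: "TA_rep q u = Rt (GT (nat (i - int q))) (GA 0)" using u False by (simp add: TA_rep_def)
      have t: "GT (nat (i - int q)) \<in> qterms (TA_gens q)" using i by simp
      have "Rt (TA_rep q u) (GA 0) \<doteq> GT (nat (i - int q))" unfolding ru by (rule qcong_Rt_Rt_cancel) (use t in simp_all)
      also have "GT (nat (i - int q)) = tnf (i - int q)" using False i by (simp add: tnf_small)
      also have "\<dots> = tnf (int q + i)"
      proof (rule tnf_cong)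
        have "int q + i = (i - int q) + 1 * (2 * int q)" by simp
        then show "(i - int q) mod (2 * int q) = (int q + i) mod (2 * int q)" by (metis mod_mult_self1)
      qed
      finally show ?thesis using e by simp
    qed
  next
    fix b assume u: "u = AE b"
    show ?thesis
    proof (cases b)
      case True then show ?thesis using u axis1_Rt_axis0 by (simp add: model_op_def sym_of_def dih_act_def TA_rep_def)
    next
      case False then show ?thesis using u qcong.idem[of "GA 0"] by (simp add: model_op_def sym_of_def dih_act_def TA_rep_def)
    qed
  qed
qed

lemma acts_normally_cong: "acts_normally y \<Longrightarrow> y \<doteq> y' \<Longrightarrow> acts_normally y'"
  unfolding acts_normally_def
proof (intro conjI ballI)
  assume P: "y \<in> qterms (TA_gens q) \<and> (\<forall>u\<in>model_carrier q. Rt (TA_rep q u) y \<doteq> TA_rep q (model_op q u (TA_eval q y)))"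
    and e: "y \<doteq> y'"
  show "y' \<in> qterms (TA_gens q)" using qcong_terms[OF e] by simp
  fix u assume u: "u \<in> model_carrier q"
  have "Rt (TA_rep q u) y' \<doteq> Rt (TA_rep q u) y" by (rule qcong_Rt_right[OF TA_rep_terms[OF u] qcong.sym[OF e]])
  also have "\<dots> \<doteq> TA_rep q (model_op q u (TA_eval q y))" using P u by blast
  also have "TA_eval q y = TA_eval q y'" by (rule TA_eval_qcong[OF q_pos e])
  finally show "Rt (TA_rep q u) y' \<doteq> TA_rep q (model_op q u (TA_eval q y'))" .
qed

lemma acts_normally_Rt: "acts_normally y1 \<Longrightarrow> acts_normally y2 \<Longrightarrow> acts_normally (Rt y1 y2)"
  unfolding acts_normally_def
proof (intro conjI ballI)
  assume P1: "y1 \<in> qterms (TA_gens q) \<and> (\<forall>u\<in>model_carrier q. Rt (TA_rep q u) y1 \<doteq> TA_rep q (model_op q u (TA_eval q y1)))"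
    and P2: "y2 \<in> qterms (TA_gens q) \<and> (\<forall>u\<in>model_carrier q. Rt (TA_rep q u) y2 \<doteq> TA_rep q (model_op q u (TA_eval q y2)))"
  then show "Rt y1 y2 \<in> qterms (TA_gens q)" by simp
  fix u assume u: "u \<in> model_carrier q"
  define u1 where "u1 = model_op q u (TA_eval q y2)"
  define u2 where "u2 = model_op q u1 (TA_eval q y1)"
  have u1: "u1 \<in> model_carrier q" "u2 \<in> model_carrier q" unfolding u1_def u2_def by (simp_all add: model_op_closed q_pos)
  have t: "y1 \<in> qterms (TA_gens q)" "y2 \<in> qterms (TA_gens q)" "TA_rep q u \<in> qterms (TA_gens q)"
    "TA_rep q u1 \<in> qterms (TA_gens q)" using P1 P2 TA_rep_terms u u1 by auto
  have "TA_rep q u \<doteq> Rt (Rt (TA_rep q u) y2) y2" by (rule qcong.sym[OF qcong_Rt_Rt_cancel]) (use t in simp_all)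
  also have "\<dots> \<doteq> Rt (TA_rep q u1) y2" unfolding u1_def by (rule qcong_Rt_left) (use P2 u in auto)
  finally have a: "TA_rep q u \<doteq> Rt (TA_rep q u1) y2" .
  have "Rt (TA_rep q u) (Rt y1 y2) \<doteq> Rt (Rt (TA_rep q u1) y2) (Rt y1 y2)" by (rule qcong_Rt_left[OF a]) (use t in simp)
  also have "\<dots> \<doteq> Rt (Rt (TA_rep q u1) y1) y2" by (rule qcong.sym[OF qcong.dist]) (use t in simp_all)
  also have "\<dots> \<doteq> Rt (TA_rep q u2) y2" unfolding u2_def by (rule qcong_Rt_left) (use P1 u1 t in auto)
  also have "\<dots> \<doteq> TA_rep q (model_op q u2 (TA_eval q y2))" using P2 u1 by blast
  also have "model_op q u2 (TA_eval q y2) = model_op q u (TA_eval q (Rt y1 y2))"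
    unfolding u2_def u1_def by (simp add: model_op_conj[OF u])
  finally show "Rt (TA_rep q u) (Rt y1 y2) \<doteq> TA_rep q (model_op q u (TA_eval q (Rt y1 y2)))" .
qed

lemma acts_normally_all: "y \<in> qterms (TA_gens q) \<Longrightarrow> acts_normally y"
proof (induction y)
  case (Gen g)
  show ?case
  proof (cases g)
    case (ArcT k) then show ?thesis using Gen acts_normally_arcT by simp
  next
    case (ArcA i)
    then have "i = 0 \<or> i = 1" using Gen by auto
    then show ?thesis
    proof
      assume "i = 0" then show ?thesis using ArcA acts_normally_axis0 by simp
    next
      assume i: "i = 1"
      have "acts_normally (Rt (GA 0) (GT (q + 1)))" by (rule acts_normally_Rt[OF acts_normally_axis0 acts_normally_arcT]) simp
      then show ?thesis using acts_normally_cong qcong.sym[OF axis_rel_1] ArcA i by blast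
    qed
  qed
next
  case (Rt y1 y2) then show ?case by (simp add: acts_normally_Rt)
next
  case (RtInv y1 y2)
  then have "acts_normally (Rt y1 y2)" by (simp add: acts_normally_Rt)
  moreover have "Rt y1 y2 \<doteq> RtInv y1 y2" by (rule qcong.sym[OF qcong_RtInv_Rt]) (use RtInv in simp_all)
  ultimately show ?case by (rule acts_normally_cong)
qed

lemma qcong_TA_rep_eval: "t \<in> qterms (TA_gens q) \<Longrightarrow> t \<doteq> TA_rep q (TA_eval q t)"
proof (induction t)
  case (Gen g)
  show ?case
  proof (cases g)
    case (ArcT k)
    then have "k \<le> q + 1" using Gen by simp
    then have "TA_rep q (TA_eval q (Gen g)) = Gen g" using ArcT q_gt_2 by (simp add: TA_rep_def)
    then show ?thesis using Gen by (simp add: qcong.refl)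
  next
    case (ArcA i)
    then have "i = 0 \<or> i = 1" using Gen by auto
    then have "TA_rep q (TA_eval q (Gen g)) = Gen g" using ArcA by (auto simp: TA_rep_def)
    then show ?thesis using Gen by (simp add: qcong.refl)
  qed
next
  case (Rt x y)
  have ex: "TA_eval q x \<in> model_carrier q" by (rule TA_eval_closed[OF q_pos])
  have "Rt x y \<doteq> Rt (TA_rep q (TA_eval q x)) y" by (rule qcong_Rt_left) (use Rt in simp_all)
  also have "\<dots> \<doteq> TA_rep q (model_op q (TA_eval q x) (TA_eval q y))" using acts_normally_all[of y] Rt ex by (simp add: acts_normally_def)
  finally show ?case by simp
next
  case (RtInv x y)
  have ex: "TA_eval q x \<in> model_carrier q" by (rule TA_eval_closed[OF q_pos])
  have "RtInv x y \<doteq> Rt x y" by (rule qcong_RtInv_Rt) (use RtInv in simp_all)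
  also have "\<dots> \<doteq> Rt (TA_rep q (TA_eval q x)) y" by (rule qcong_Rt_left) (use RtInv in simp_all)
  also have "\<dots> \<doteq> TA_rep q (model_op q (TA_eval q x) (TA_eval q y))" using acts_normally_all[of y] RtInv ex by (simp add: acts_normally_def)
  finally show ?case by simp
qed


lemma class_value_qclass:
  "t \<in> qterms (TA_gens q) \<Longrightarrow> class_value q (qclass (TA_gens q) (Q2_TA_rels q) t) = TA_eval q t"
  unfolding class_value_def using qcong_some_qclass TA_eval_qcong[OF q_pos] by metis

lemma Q2_TA_carrier_eq: "Q2_TA_carrier q = qclass (TA_gens q) (Q2_TA_rels q) ` qterms (TA_gens q)"
  by (simp add: Q2_TA_carrier_def pres_carrier_def Q2_TA_rels_def)

sublocale Q2: model_copy q "Q2_TA_carrier q" "Q2_TA_op q" "class_value q" "value_class q"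
proof
  show "q > 0" by (rule q_pos)
  show "class_value q U \<in> model_carrier q" if "U \<in> Q2_TA_carrier q" for U
    using that by (auto simp: Q2_TA_carrier_eq class_value_qclass intro!: TA_eval_closed q_pos)
  show "value_class q m \<in> Q2_TA_carrier q" if "m \<in> model_carrier q" for m
    using that by (auto simp: Q2_TA_carrier_eq value_class_def intro!: imageI TA_rep_terms)
  show "value_class q (class_value q U) = U" if "U \<in> Q2_TA_carrier q" for U
    using that qclass_eq[OF qcong.sym[OF qcong_TA_rep_eval]]
    by (auto simp: Q2_TA_carrier_eq value_class_def class_value_qclass)
  show "class_value q (value_class q m) = m" if "m \<in> model_carrier q" for m
    using that by (simp add: value_class_def class_value_qclass TA_rep_terms TA_eval_rep)
  show "Q2_TA_op q U V = value_class q (model_op q (class_value q U) (class_value q V))"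
    if UV: "U \<in> Q2_TA_carrier q" "V \<in> Q2_TA_carrier q" for U V
  proof -
    let ?cl = "qclass (TA_gens q) (Q2_TA_rels q)"
    obtain s t where st: "s \<in> qterms (TA_gens q)" "t \<in> qterms (TA_gens q)" "U = ?cl s" "V = ?cl t"
      using UV by (auto simp: Q2_TA_carrier_eq)
    have "Q2_TA_op q U V = ?cl (Rt s t)" using st by (simp add: Q2_TA_op_def Q2_TA_rels_def pres_op_qclass)
    also have "\<dots> = ?cl (TA_rep q (TA_eval q (Rt s t)))" using st by (intro qclass_eq qcong_TA_rep_eval) simp
    also have "\<dots> = value_class q (model_op q (class_value q U) (class_value q V))"
      using st by (simp add: value_class_def class_value_qclass)
    finally show ?thesis .
  qed
qed

end

theorem mainTheorem4:
  fixes q :: nat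
  assumes "q > 2"
  shows "Inn_group (Q2_TA_carrier q) (Q2_TA_op q) \<cong> dihedral_group (2 * q div gcd 2 q)
       \<and> Trans_group (Q2_TA_carrier q) (Q2_TA_op q) \<cong> dihedral_group q"
proof -
  interpret TA_diagram q using assms by unfold_locales
  show ?thesis by (rule Q2.Inn_Trans_iso)
qed

end
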